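(* Let $F$ be any surface (including $\mathbb{RP}^2$), and let $D_p$ be a link diagram in $F$ with a crossing $p$; let $D_0$ (resp. $D_\infty$) be the diagram obtained from $D_p$ by the $(+1)$-smoothing (resp. $(-1)$-smoothing) of $p$. Order the crossings of $D_0$ and $D_\infty$ by the order inherited from $D_p$. Let $\alpha_0:C_{ijs}(D_\infty)\to C_{i-1,j-1,s}(D_p)$ send an enhanced state of $D_\infty$ to the enhanced state of $D_p$ with the same markers at the other crossings, marker $-1$ at $p$, and the same circle labels; let $\alpha(S)=(-1)^{t'(S)}\alpha_0(S)$, where $t'(S)$ is the number of $-1$ markers of $S$ at crossings preceding $p$. Let $\beta:C_{ijs}(D_p)\to C_{i-1,j-1,s}(D_0)$ send an enhanced state with marker $+1$ at $p$ to the corresponding enhanced state of $D_0$ (same other markers and labels) and an enhanced state with marker $-1$ at $p$ to $0$. Then (1) $\alpha$ and $\beta$ are chain maps (commute with the differentials $d$), and (2) the sequence $0\to C(D_\infty)\xrightarrow{\alpha}C(D_p)\xrightarrow{\beta}C(D_0)\to 0$ is exact.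
   Context: Let $F$ be a surface (possibly non-orientable). A link diagram in $F$ is a finite collection of closed curves generically immersed in $F$ with finitely many transverse double points (crossings) with over/under information. For a crossing, its $(+1)$-smoothing (resp. $(-1)$-smoothing) is the smoothing with coefficient $A$ (resp. $A^{-1}$) in the Kauffman bracket relation $L_p=AL_0+A^{-1}L_\infty$. A Kauffman state assigns a marker $\pm1$ to each crossing; smoothing accordingly yields disjoint circles. An enhanced state additionally labels each circle $+$ or $-$. A circle is trivial if it bounds a disk in $F$, bounding if it bounds a disk or a Möbius band. $\mathcal C(F)$ is the set of unoriented unbounding simple closed curves in $F$ up to homotopy. For an enhanced state $S$: $I(S)=\#\{+1\text{ markers}\}-\#\{-1\text{ markers}\}$, $\tau(S)=\#\{\text{trivial circles labeled }+\}-\#\{\text{trivial circles labeled }-\}$, $J(S)=I(S)+2\tau(S)$, $\Psi(S)=\sum_k\varepsilon_k\gamma_k\in\mathbb Z\mathcal C(F)$ over unbounding circles $\gamma_k$ with labels $\varepsilon_k$. $C_{ijs}(D)$ is the free abelian group on enhanced states with $(I,J,\Psi)=(i,j,s)$, and $C(D)=\bigoplus C_{ijs}(D)$. For a total order of crossings: $[S:S']_v=1$ iff (a) $v$ has marker $+1$ in $S$, $-1$ in $S'$, (b) other markers agree, (c) circles common to $S,S'$ have equal labels, (d) $J(S)=J(S')$, $\Psi(S)=\Psi(S')$; else $0$. $d_v(S)=\sum_{S'}[S:S']_vS'$, $t(S,v)$ = number of $-1$ markers of $S$ at crossings greater than $v$, $d(S)=\sum_v(-1)^{t(S,v)}d_v(S)$.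 *)

theory Defs
  imports "HOL-Analysis.Analysis"
begin

definition surface :: "'a topology \<Rightarrow> bool" where
  "surface F \<longleftrightarrow> Hausdorff_space F \<and> second_countable F \<and>
     (\<forall>x\<in>topspace F. \<exists>U. openin F U \<and> x \<in> U \<and>
        (\<exists>V::complex set. open V \<and> subtopology F U homeomorphic_space top_of_set V))"

definition scc :: "'a topology \<Rightarrow> 'a set \<Rightarrow> bool" where
  "scc F C \<longleftrightarrow> C \<subseteq> topspace F \<and>
     subtopology F C homeomorphic_space top_of_set (sphere (0::complex) 1)"

definition trivial_curve :: "'a topology \<Rightarrow> 'a set \<Rightarrow> bool" where
  "trivial_curve F C \<longleftrightarrow> (\<exists>D h. D \<subseteq> topspace F \<and>
     homeomorphic_map (top_of_set (cball (0::complex) 1)) (subtopology F D) h \<and>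
     h ` sphere 0 1 = C)"

definition mobius_pt :: "real \<Rightarrow> real \<Rightarrow> real \<times> real \<times> real" where
  "mobius_pt \<theta> t = ((1 + t / 2 * cos (\<theta> / 2)) * cos \<theta>,
                     (1 + t / 2 * cos (\<theta> / 2)) * sin \<theta>,
                     t / 2 * sin (\<theta> / 2))"

definition mobius_band :: "(real \<times> real \<times> real) set" where
  "mobius_band = {mobius_pt \<theta> t | \<theta> t. 0 \<le> \<theta> \<and> \<theta> \<le> 2 * pi \<and> -1 \<le> t \<and> t \<le> 1}"

definition mobius_boundary :: "(real \<times> real \<times> real) set" where
  "mobius_boundary = {mobius_pt \<theta> t | \<theta> t. 0 \<le> \<theta> \<and> \<theta> \<le> 2 * pi \<and> \<bar>t\<bar> = 1}"

definition bounding_curve :: "'a topology \<Rightarrow> 'a set \<Rightarrow> bool" where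
  "bounding_curve F C \<longleftrightarrow> trivial_curve F C \<or> (\<exists>M h. M \<subseteq> topspace F \<and>
     homeomorphic_map (top_of_set mobius_band) (subtopology F M) h \<and>
     h ` mobius_boundary = C)"

definition param_curve :: "'a topology \<Rightarrow> 'a set \<Rightarrow> (complex \<Rightarrow> 'a) \<Rightarrow> bool" where
  "param_curve F C g \<longleftrightarrow> C \<subseteq> topspace F \<and>
     homeomorphic_map (top_of_set (sphere (0::complex) 1)) (subtopology F C) g"

text \<open>Unoriented free homotopy of simple closed curves (the existential over
  parametrisations covers both orientations).\<close>
definition homotopic_curves :: "'a topology \<Rightarrow> 'a set \<Rightarrow> 'a set \<Rightarrow> bool" where
  "homotopic_curves F C1 C2 \<longleftrightarrow> (\<exists>g1 g2. param_curve F C1 g1 \<and> param_curve F C2 g2 \<and>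
     homotopic_with (\<lambda>_. True) (top_of_set (sphere (0::complex) 1)) F g1 g2)"

definition unbounding :: "'a topology \<Rightarrow> 'a set \<Rightarrow> bool" where
  "unbounding F C \<longleftrightarrow> scc F C \<and> \<not> bounding_curve F C"

text \<open>A link diagram in F with crossing set X (a finite set of naturals; the total
  order on crossings is the order of the naturals) is represented by its Kauffman
  smoothing map: a Kauffman state is a function s :: nat => bool (True = marker +1,
  False = marker -1), normalised to be False outside X, and circ s is the set of
  circles (pairwise disjoint simple closed curves in F) obtained by smoothing
  every crossing according to s.\<close>

definition states :: "nat set \<Rightarrow> (nat \<Rightarrow> bool) set" where
  "states X = {s. \<forall>x. x \<notin> X \<longrightarrow> \<not> s x}"

definition diagram :: "'a topology \<Rightarrow> nat set \<Rightarrow> ((nat \<Rightarrow> bool) \<Rightarrow> 'a set set) \<Rightarrow> bool" where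
  "diagram F X circ \<longleftrightarrow> finite X \<and>
     (\<forall>s\<in>states X. finite (circ s) \<and> (\<forall>C\<in>circ s. scc F C) \<and>
        (\<forall>C1\<in>circ s. \<forall>C2\<in>circ s. C1 \<noteq> C2 \<longrightarrow> C1 \<inter> C2 = {}))"

text \<open>The diagrams D_0 and D_infinity obtained from D_p by the (+1)- resp.
  (-1)-smoothing at p: smoothing their crossings yields exactly the circles of
  D_p for the states with marker +1 resp. -1 at p.\<close>
definition smooth0 :: "nat \<Rightarrow> ((nat \<Rightarrow> bool) \<Rightarrow> 'a set set) \<Rightarrow> ((nat \<Rightarrow> bool) \<Rightarrow> 'a set set)" where
  "smooth0 p circ = (\<lambda>s. circ (s(p := True)))"

definition smoothinf :: "nat \<Rightarrow> ((nat \<Rightarrow> bool) \<Rightarrow> 'a set set) \<Rightarrow> ((nat \<Rightarrow> bool) \<Rightarrow> 'a set set)" where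
  "smoothinf p circ = (\<lambda>s. circ (s(p := False)))"

text \<open>An enhanced state is a pair (s, l): a Kauffman state and a labelling of
  its circles (True = +, False = -), the labelling being False off the circles.\<close>
type_synonym 'a enh = "(nat \<Rightarrow> bool) \<times> ('a set \<Rightarrow> bool)"

definition enh_states :: "nat set \<Rightarrow> ((nat \<Rightarrow> bool) \<Rightarrow> 'a set set) \<Rightarrow> 'a enh set" where
  "enh_states X circ = {(s, l). s \<in> states X \<and> (\<forall>C. C \<notin> circ s \<longrightarrow> \<not> l C)}"

definition I_idx :: "nat set \<Rightarrow> 'a enh \<Rightarrow> int" where
  "I_idx X S = int (card {x\<in>X. fst S x}) - int (card {x\<in>X. \<not> fst S x})"

definition tau :: "'a topology \<Rightarrow> ((nat \<Rightarrow> bool) \<Rightarrow> 'a set set) \<Rightarrow> 'a enh \<Rightarrow> int" where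
  "tau F circ S = int (card {C\<in>circ (fst S). trivial_curve F C \<and> snd S C})
                - int (card {C\<in>circ (fst S). trivial_curve F C \<and> \<not> snd S C})"

definition J_idx :: "'a topology \<Rightarrow> nat set \<Rightarrow> ((nat \<Rightarrow> bool) \<Rightarrow> 'a set set) \<Rightarrow> 'a enh \<Rightarrow> int" where
  "J_idx F X circ S = I_idx X S + 2 * tau F circ S"

text \<open>Psi(S) in Z C(F), represented by its coefficient function: the coefficient
  at the class of an unbounding simple closed curve c is the signed number of
  unbounding circles of S homotopic to c; the value is 0 at all other sets.
  Two such functions are equal iff the corresponding elements of Z C(F) are.\<close>
definition Psi :: "'a topology \<Rightarrow> ((nat \<Rightarrow> bool) \<Rightarrow> 'a set set) \<Rightarrow> 'a enh \<Rightarrow> 'a set \<Rightarrow> int" where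
  "Psi F circ S = (\<lambda>c. if unbounding F c then
      (\<Sum>C\<in>{C\<in>circ (fst S). unbounding F C \<and> homotopic_curves F C c}.
          if snd S C then 1 else -1)
     else 0)"

definition incid :: "'a topology \<Rightarrow> nat set \<Rightarrow> ((nat \<Rightarrow> bool) \<Rightarrow> 'a set set) \<Rightarrow> nat \<Rightarrow> 'a enh \<Rightarrow> 'a enh \<Rightarrow> int" where
  "incid F X circ v S S' =
     (if v \<in> X \<and> fst S v \<and> \<not> fst S' v \<and> (\<forall>x. x \<noteq> v \<longrightarrow> fst S x = fst S' x) \<and>
         (\<forall>C\<in>circ (fst S) \<inter> circ (fst S'). snd S C = snd S' C) \<and>
         J_idx F X circ S = J_idx F X circ S' \<and> Psi F circ S = Psi F circ S'
      then 1 else 0)"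

definition t_cnt :: "nat set \<Rightarrow> 'a enh \<Rightarrow> nat \<Rightarrow> nat" where
  "t_cnt X S v = card {x\<in>X. v < x \<and> \<not> fst S x}"

text \<open>Chains: elements of the free abelian group on the enhanced states,
  i.e. integer-valued functions vanishing off the enhanced states.\<close>
definition is_chain :: "nat set \<Rightarrow> ((nat \<Rightarrow> bool) \<Rightarrow> 'a set set) \<Rightarrow> ('a enh \<Rightarrow> int) \<Rightarrow> bool" where
  "is_chain X circ x \<longleftrightarrow> (\<forall>S. S \<notin> enh_states X circ \<longrightarrow> x S = 0)"

definition diff :: "'a topology \<Rightarrow> nat set \<Rightarrow> ((nat \<Rightarrow> bool) \<Rightarrow> 'a set set) \<Rightarrow>
     ('a enh \<Rightarrow> int) \<Rightarrow> ('a enh \<Rightarrow> int)" where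
  "diff F X circ x = (\<lambda>S'. if S' \<in> enh_states X circ then
      (\<Sum>S\<in>enh_states X circ. x S *
         (\<Sum>v\<in>X. (-1) ^ t_cnt X S v * incid F X circ v S S'))
     else 0)"

definition lin_ext :: "'e set \<Rightarrow> ('e \<Rightarrow> 'f) \<Rightarrow> ('e \<Rightarrow> int) \<Rightarrow> ('e \<Rightarrow> int) \<Rightarrow> ('f \<Rightarrow> int)" where
  "lin_ext A f c x = (\<lambda>T. \<Sum>S\<in>A. if f S = T then c S * x S else 0)"

text \<open>alpha_0 and beta on enhanced states: set the marker at p to -1 (for alpha_0
  this is the marker -1 at p in D_p; for beta it is the normalisation of a state
  of D_0, whose crossing set does not contain p), keep everything else.\<close>
definition alpha0 :: "nat \<Rightarrow> 'a enh \<Rightarrow> 'a enh" where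
  "alpha0 p S = ((fst S)(p := False), snd S)"

definition beta0 :: "nat \<Rightarrow> 'a enh \<Rightarrow> 'a enh" where
  "beta0 p S = ((fst S)(p := False), snd S)"

definition t_pre :: "nat set \<Rightarrow> nat \<Rightarrow> 'a enh \<Rightarrow> nat" where
  "t_pre X p S = card {x\<in>X. x < p \<and> \<not> fst S x}"

definition alpha_map :: "nat set \<Rightarrow> ((nat \<Rightarrow> bool) \<Rightarrow> 'a set set) \<Rightarrow> nat \<Rightarrow>
     ('a enh \<Rightarrow> int) \<Rightarrow> ('a enh \<Rightarrow> int)" where
  "alpha_map X circ p = lin_ext (enh_states (X - {p}) (smoothinf p circ)) (alpha0 p)
      (\<lambda>S. (-1) ^ t_pre (X - {p}) p S)"

definition beta_map :: "nat set \<Rightarrow> ((nat \<Rightarrow> bool) \<Rightarrow> 'a set set) \<Rightarrow> nat \<Rightarrow>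
     ('a enh \<Rightarrow> int) \<Rightarrow> ('a enh \<Rightarrow> int)" where
  "beta_map X circ p = lin_ext {S\<in>enh_states X circ. fst S p} (beta0 p) (\<lambda>_. 1)"

end

theory Submission
  imports Defs
begin

text \<open>The enhanced states of D_inf are exactly those of D_p with marker -1 at p, and
  setting the marker at p to +1 identifies the enhanced states of D_0 with those of D_p
  having marker +1 at p. Both identifications keep the circles, hence tau and Psi, and
  lower I and J by one, so the incidence numbers at crossings v \<noteq> p agree, while no
  incidence leads from marker -1 to marker +1 at p. Thus alpha and beta are, up to sign,
  the inclusion of and the projection onto coordinates, which gives exactness at once.
  The signs are the only subtle point: deleting p shifts t(S,v) by one exactly when v < p,
  and along an incidence at v the count t' shifts by one exactly when v < p as well.\<close>

lemma finite_bool_funs_False_outside: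
  assumes "finite K"
  shows "finite {f :: 'b \<Rightarrow> bool. \<forall>x. x \<notin> K \<longrightarrow> \<not> f x}"
  using finite_set_of_finite_funs[OF assms, of UNIV False] by simp

lemma finite_enh_states:
  assumes "finite X" and "\<And>s. s \<in> states X \<Longrightarrow> finite (circ s)"
  shows "finite (enh_states X circ)"
proof -
  have "enh_states X circ = Sigma (states X) (\<lambda>s. {l. \<forall>C. C \<notin> circ s \<longrightarrow> \<not> l C})"
    by (auto simp: enh_states_def)
  then show ?thesis
    using assms unfolding states_def
    by (auto intro!: finite_SigmaI finite_bool_funs_False_outside)
qed

lemma lin_ext_bij_apply:
  assumes "finite B" and "bij_betw g B A" and "\<And>R. R \<in> B \<Longrightarrow> f (g R) = R"
  shows "lin_ext A f c x T = (if T \<in> B then c (g T) * x (g T) else 0)"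
proof -
  have "lin_ext A f c x T = (\<Sum>R\<in>B. if f (g R) = T then c (g R) * x (g R) else 0)"
    unfolding lin_ext_def by (rule sum.reindex_bij_betw[OF assms(2), symmetric])
  also have "\<dots> = (\<Sum>R\<in>B. if R = T then c (g R) * x (g R) else 0)"
    using assms(3) by (intro sum.cong) auto
  also have "\<dots> = (if T \<in> B then c (g T) * x (g T) else 0)"
    by (rule sum.delta[OF assms(1)])
  finally show ?thesis .
qed

definition mark_plus :: "nat \<Rightarrow> 'a enh \<Rightarrow> 'a enh" where
  "mark_plus p T = ((fst T)(p := True), snd T)"

lemma fst_mark_plus [simp]: "fst (mark_plus p T) = (fst T)(p := True)"
  and snd_mark_plus [simp]: "snd (mark_plus p T) = snd T"
  by (simp_all add: mark_plus_def)

lemma enh_states_Diff_singletonD: "T \<in> enh_states (X - {p}) circ \<Longrightarrow> \<not> fst T p"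
  by (auto simp: enh_states_def states_def)

lemma enh_states_smoothinf:
  assumes "p \<in> X"
  shows "enh_states (X - {p}) (smoothinf p circ) = {S \<in> enh_states X circ. \<not> fst S p}"
  using assms by (auto simp: enh_states_def states_def smoothinf_def fun_upd_idem)

lemma alpha0_eq_self: "\<not> fst S p \<Longrightarrow> alpha0 p S = S"
  by (simp add: alpha0_def fun_upd_idem)

lemma beta0_mark_plus: "\<not> fst T p \<Longrightarrow> beta0 p (mark_plus p T) = T"
  by (simp add: beta0_def fun_upd_idem)

lemma mark_plus_beta0: "fst S p \<Longrightarrow> mark_plus p (beta0 p S) = S"
  by (simp add: mark_plus_def beta0_def fun_upd_idem)

lemma beta0_in_enh_states_smooth0:
  "S \<in> enh_states X circ \<Longrightarrow> fst S p \<Longrightarrow> beta0 p S \<in> enh_states (X - {p}) (smooth0 p circ)"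
  by (auto simp: enh_states_def states_def smooth0_def beta0_def fun_upd_idem)

lemma bij_betw_mark_plus:
  assumes "p \<in> X"
  shows "bij_betw (mark_plus p) (enh_states (X - {p}) (smooth0 p circ))
           {S \<in> enh_states X circ. fst S p}"
proof (rule bij_betw_byWitness[where f' = "beta0 p"])
  show "mark_plus p ` enh_states (X - {p}) (smooth0 p circ) \<subseteq> {S \<in> enh_states X circ. fst S p}"
    using assms by (auto simp: enh_states_def states_def smooth0_def mark_plus_def split: if_splits)
qed (auto simp: beta0_mark_plus mark_plus_beta0 enh_states_Diff_singletonD
          beta0_in_enh_states_smooth0)

lemma I_idx_marker_minus:
  assumes "finite X" and "p \<in> X" and "\<not> fst S p"
  shows "I_idx X S = I_idx (X - {p}) S - 1"
proof -
  have "{x\<in>X. fst S x} = {x\<in>X - {p}. fst S x}"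
    and "{x\<in>X. \<not> fst S x} = insert p {x\<in>X - {p}. \<not> fst S x}"
    using assms by auto
  then show ?thesis
    using assms(1) by (simp add: I_idx_def card_insert_disjoint)
qed

lemma I_idx_mark_plus:
  assumes "finite X" and "p \<in> X"
  shows "I_idx X (mark_plus p R) = I_idx (X - {p}) R + 1"
proof -
  have "{x\<in>X. fst (mark_plus p R) x} = insert p {x\<in>X - {p}. fst R x}"
    and "{x\<in>X. \<not> fst (mark_plus p R) x} = {x\<in>X - {p}. \<not> fst R x}"
    using assms by auto
  then show ?thesis
    using assms(1) by (simp add: I_idx_def card_insert_disjoint)
qed

lemma tau_cong: "circ (fst S) = circ' (fst S') \<Longrightarrow> snd S = snd S' \<Longrightarrow> tau F circ S = tau F circ' S'"
  unfolding tau_def by (simp only:)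

lemma Psi_cong: "circ (fst S) = circ' (fst S') \<Longrightarrow> snd S = snd S' \<Longrightarrow> Psi F circ S = Psi F circ' S'"
  unfolding Psi_def by (simp only:)

lemma smoothinf_marker_minus: "\<not> fst S p \<Longrightarrow> smoothinf p circ (fst S) = circ (fst S)"
  by (simp add: smoothinf_def fun_upd_idem)

lemma tau_smoothinf: "\<not> fst S p \<Longrightarrow> tau F (smoothinf p circ) S = tau F circ S"
  by (rule tau_cong) (simp_all add: smoothinf_marker_minus)

lemma tau_mark_plus: "tau F circ (mark_plus p R) = tau F (smooth0 p circ) R"
  by (rule tau_cong) (simp_all add: smooth0_def)

lemma Psi_smoothinf: "\<not> fst S p \<Longrightarrow> Psi F (smoothinf p circ) S = Psi F circ S"
  by (rule Psi_cong) (simp_all add: smoothinf_marker_minus)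

lemma Psi_mark_plus: "Psi F circ (mark_plus p R) = Psi F (smooth0 p circ) R"
  by (rule Psi_cong) (simp_all add: smooth0_def)

lemma J_idx_marker_minus:
  assumes "finite X" and "p \<in> X" and "\<not> fst S p"
  shows "J_idx F X circ S = J_idx F (X - {p}) (smoothinf p circ) S - 1"
  by (simp add: J_idx_def I_idx_marker_minus[OF assms] tau_smoothinf[OF assms(3)])

lemma J_idx_mark_plus:
  assumes "finite X" and "p \<in> X"
  shows "J_idx F X circ (mark_plus p R) = J_idx F (X - {p}) (smooth0 p circ) R + 1"
  by (simp add: J_idx_def I_idx_mark_plus[OF assms] tau_mark_plus)

lemma alpha0_grading:
  assumes "finite X" and "p \<in> X" and "S \<in> enh_states (X - {p}) (smoothinf p circ)"
  shows "alpha0 p S \<in> enh_states X circ \<and>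
     I_idx X (alpha0 p S) = I_idx (X - {p}) S - 1 \<and>
     J_idx F X circ (alpha0 p S) = J_idx F (X - {p}) (smoothinf p circ) S - 1 \<and>
     Psi F circ (alpha0 p S) = Psi F (smoothinf p circ) S"
proof -
  have "S \<in> enh_states X circ" and "\<not> fst S p"
    using assms(3) enh_states_smoothinf[OF assms(2), of circ] by auto
  then show ?thesis
    by (simp add: alpha0_eq_self I_idx_marker_minus[OF assms(1,2)]
        J_idx_marker_minus[OF assms(1,2)] Psi_smoothinf)
qed

lemma beta0_grading:
  assumes "finite X" and "p \<in> X" and "S \<in> enh_states X circ" and "fst S p"
  shows "beta0 p S \<in> enh_states (X - {p}) (smooth0 p circ) \<and>
     I_idx (X - {p}) (beta0 p S) = I_idx X S - 1 \<and>
     J_idx F (X - {p}) (smooth0 p circ) (beta0 p S) = J_idx F X circ S - 1 \<and>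
     Psi F (smooth0 p circ) (beta0 p S) = Psi F circ S"
  using I_idx_mark_plus[OF assms(1,2), of "beta0 p S"] J_idx_mark_plus[OF assms(1,2), of F circ "beta0 p S"]
    Psi_mark_plus[of F circ p "beta0 p S"]
  by (simp add: mark_plus_beta0[OF assms(4)] beta0_in_enh_states_smooth0[OF assms(3,4)])

lemma t_cnt_marker_minus:
  assumes "finite X" and "p \<in> X" and "\<not> fst S p"
  shows "t_cnt X S v = t_cnt (X - {p}) S v + (if v < p then 1 else 0)"
proof (cases "v < p")
  case True
  then have "{x\<in>X. v < x \<and> \<not> fst S x} = insert p {x\<in>X - {p}. v < x \<and> \<not> fst S x}"
    using assms by auto
  then show ?thesis
    using True assms(1) by (simp add: t_cnt_def card_insert_disjoint)
next
  case False
  then have "{x\<in>X. v < x \<and> \<not> fst S x} = {x\<in>X - {p}. v < x \<and> \<not> fst S x}"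
    using assms by auto
  then show ?thesis
    using False by (simp add: t_cnt_def)
qed

lemma t_cnt_mark_plus: "t_cnt X (mark_plus p R) v = t_cnt (X - {p}) R v"
proof -
  have "{x\<in>X. v < x \<and> \<not> fst (mark_plus p R) x} = {x\<in>X - {p}. v < x \<and> \<not> fst R x}"
    by auto
  then show ?thesis
    by (simp add: t_cnt_def)
qed

lemma t_pre_flip:
  assumes "finite Y" and "v \<in> Y" and "fst S v" and "\<not> fst T v"
    and "\<forall>x. x \<noteq> v \<longrightarrow> fst S x = fst T x"
  shows "t_pre Y p T = t_pre Y p S + (if v < p then 1 else 0)"
proof (cases "v < p")
  case True
  then have "{x\<in>Y. x < p \<and> \<not> fst T x} = insert v {x\<in>Y. x < p \<and> \<not> fst S x}"
    using assms by auto
  then show ?thesis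
    using True assms by (simp add: t_pre_def card_insert_disjoint)
next
  case False
  then have "{x\<in>Y. x < p \<and> \<not> fst T x} = {x\<in>Y. x < p \<and> \<not> fst S x}"
    using assms by auto
  then show ?thesis
    using False by (simp add: t_pre_def)
qed

lemma incid_nonzeroD:
  assumes "incid F X circ v S T \<noteq> 0"
  shows "v \<in> X" and "fst S v" and "\<not> fst T v" and "\<forall>x. x \<noteq> v \<longrightarrow> fst S x = fst T x"
  using assms by (simp_all add: incid_def split: if_splits)

lemma incid_smoothinf:
  assumes "finite X" and "p \<in> X" and "\<not> fst S p" and "\<not> fst T p" and "v \<noteq> p"
  shows "incid F (X - {p}) (smoothinf p circ) v S T = incid F X circ v S T"
proof -
  have "(J_idx F (X - {p}) (smoothinf p circ) S = J_idx F (X - {p}) (smoothinf p circ) T)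
      = (J_idx F X circ S = J_idx F X circ T)"
    using J_idx_marker_minus[OF assms(1,2,3)] J_idx_marker_minus[OF assms(1,2,4)] by simp
  then show ?thesis
    using assms by (simp add: incid_def smoothinf_marker_minus Psi_smoothinf)
qed

lemma incid_mark_plus:
  assumes "finite X" and "p \<in> X" and "\<not> fst R p" and "\<not> fst T p" and "v \<noteq> p"
  shows "incid F X circ v (mark_plus p R) (mark_plus p T) = incid F (X - {p}) (smooth0 p circ) v R T"
proof -
  have "(\<forall>x. x \<noteq> v \<longrightarrow> fst (mark_plus p R) x = fst (mark_plus p T) x)
      = (\<forall>x. x \<noteq> v \<longrightarrow> fst R x = fst T x)"
    using assms by auto
  then show ?thesis
    using assms by (simp add: incid_def J_idx_mark_plus Psi_mark_plus smooth0_def)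
qed

definition diff_coeff ::
    "'a topology \<Rightarrow> nat set \<Rightarrow> ((nat \<Rightarrow> bool) \<Rightarrow> 'a set set) \<Rightarrow> 'a enh \<Rightarrow> 'a enh \<Rightarrow> int" where
  "diff_coeff F X circ S T = (\<Sum>v\<in>X. (-1) ^ t_cnt X S v * incid F X circ v S T)"

lemma diff_apply:
  "diff F X circ x T = (if T \<in> enh_states X circ
      then \<Sum>S\<in>enh_states X circ. x S * diff_coeff F X circ S T else 0)"
  by (simp add: diff_def diff_coeff_def)

lemma diff_coeff_remove_crossing:
  assumes "finite X" and "\<not> fst S p \<or> fst T p"
  shows "diff_coeff F X circ S T = (\<Sum>v\<in>X - {p}. (-1) ^ t_cnt X S v * incid F X circ v S T)"
  unfolding diff_coeff_def
  using assms incid_nonzeroD(2,3)[of F X circ p S T]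
  by (intro sum.mono_neutral_right) auto

lemma diff_coeff_eq_0:
  assumes "\<not> fst S p" and "fst T p"
  shows "diff_coeff F X circ S T = 0"
  unfolding diff_coeff_def
proof (intro sum.neutral ballI)
  fix v
  have "incid F X circ v S T = 0"
    using assms by (metis incid_nonzeroD(2,4))
  then show "(-1) ^ t_cnt X S v * incid F X circ v S T = 0"
    by simp
qed

lemma diff_coeff_smoothinf:
  assumes "finite X" and "p \<in> X" and "\<not> fst S p" and "\<not> fst T p"
  shows "(-1) ^ t_pre (X - {p}) p S * diff_coeff F X circ S T
       = (-1) ^ t_pre (X - {p}) p T * diff_coeff F (X - {p}) (smoothinf p circ) S T"
proof -
  have term_eq: "(-1) ^ t_pre (X - {p}) p S * ((-1) ^ t_cnt X S v * incid F X circ v S T)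
      = (-1) ^ t_pre (X - {p}) p T
          * ((-1) ^ t_cnt (X - {p}) S v * incid F (X - {p}) (smoothinf p circ) v S T)"
    if v: "v \<in> X - {p}" for v
  proof (cases "incid F X circ v S T = 0")
    case True
    then show ?thesis
      using v incid_smoothinf[OF assms, of v F circ] by simp
  next
    case False
    then have "t_pre (X - {p}) p T = t_pre (X - {p}) p S + (if v < p then 1 else 0)"
      using v assms(1) by (intro t_pre_flip) (auto dest: incid_nonzeroD)
    then show ?thesis
      using v incid_smoothinf[OF assms, of v F circ] t_cnt_marker_minus[OF assms(1-3), of v]
      by (simp add: power_add)
  qed
  show ?thesis
    using diff_coeff_remove_crossing[OF assms(1), of S p T] assms(3)
    by (simp add: diff_coeff_def sum_distrib_left term_eq)
qed

lemma diff_coeff_mark_plus: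
  assumes "finite X" and "p \<in> X" and "\<not> fst R p" and "\<not> fst T p"
  shows "diff_coeff F X circ (mark_plus p R) (mark_plus p T)
       = diff_coeff F (X - {p}) (smooth0 p circ) R T"
  using diff_coeff_remove_crossing[OF assms(1), of "mark_plus p R" p "mark_plus p T"]
  by (simp add: diff_coeff_def t_cnt_mark_plus incid_mark_plus[OF assms])

lemma alpha_map_apply:
  assumes "finite (enh_states X circ)" and "p \<in> X"
  shows "alpha_map X circ p x T = (if T \<in> enh_states (X - {p}) (smoothinf p circ)
           then (-1) ^ t_pre (X - {p}) p T * x T else 0)"
proof -
  have "finite (enh_states (X - {p}) (smoothinf p circ))"
    using assms by (simp add: enh_states_smoothinf)
  from lin_ext_bij_apply[OF this bij_betw_id] show ?thesis
    unfolding alpha_map_def by (simp add: alpha0_eq_self enh_states_Diff_singletonD)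
qed

lemma beta_map_apply:
  assumes "finite (enh_states X circ)" and "p \<in> X"
  shows "beta_map X circ p y T = (if T \<in> enh_states (X - {p}) (smooth0 p circ)
           then y (mark_plus p T) else 0)"
proof -
  have "finite (enh_states (X - {p}) (smooth0 p circ))"
    using assms bij_betw_finite[OF bij_betw_mark_plus[OF assms(2), of circ]] by simp
  from lin_ext_bij_apply[OF this bij_betw_mark_plus[OF assms(2)]] show ?thesis
    unfolding beta_map_def by (simp add: beta0_mark_plus enh_states_Diff_singletonD)
qed

lemma is_chain_alpha_map:
  assumes "finite (enh_states X circ)" and "p \<in> X"
  shows "is_chain X circ (alpha_map X circ p x)"
  using assms by (simp add: is_chain_def alpha_map_apply enh_states_smoothinf)

lemma is_chain_beta_map:
  assumes "finite (enh_states X circ)" and "p \<in> X"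
  shows "is_chain (X - {p}) (smooth0 p circ) (beta_map X circ p y)"
  using assms by (simp add: is_chain_def beta_map_apply)

lemma diff_alpha_map_apply:
  assumes "finite (enh_states X circ)" and "p \<in> X"
  shows "diff F X circ (alpha_map X circ p x) T
      = (if T \<in> enh_states X circ
         then \<Sum>S\<in>enh_states (X - {p}) (smoothinf p circ).
                (-1) ^ t_pre (X - {p}) p S * x S * diff_coeff F X circ S T
         else 0)"
proof -
  have "(\<Sum>S\<in>enh_states X circ. alpha_map X circ p x S * diff_coeff F X circ S T)
      = (\<Sum>S\<in>enh_states (X - {p}) (smoothinf p circ).
           (-1) ^ t_pre (X - {p}) p S * x S * diff_coeff F X circ S T)"
    by (rule sum.mono_neutral_cong_right[OF assms(1)])
      (simp_all add: enh_states_smoothinf[OF assms(2)] alpha_map_apply[OF assms])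
  then show ?thesis
    by (simp add: diff_apply)
qed

lemma alpha_map_diff:
  assumes "finite X" and "finite (enh_states X circ)" and "p \<in> X"
  shows "alpha_map X circ p (diff F (X - {p}) (smoothinf p circ) x)
       = diff F X circ (alpha_map X circ p x)"
proof
  fix T
  let ?A = "enh_states (X - {p}) (smoothinf p circ)" and ?E = "enh_states X circ"
  let ?sgn = "\<lambda>S. (-1::int) ^ t_pre (X - {p}) p S"
  have A_eq: "?A = {S \<in> ?E. \<not> fst S p}"
    by (rule enh_states_smoothinf[OF assms(3)])
  note diff_alpha = diff_alpha_map_apply[OF assms(2,3), of F x T]
  consider (outside) "T \<notin> ?E" | (minus) "T \<in> ?A" | (plus) "T \<in> ?E" "fst T p"
    using A_eq by blast
  then show "alpha_map X circ p (diff F (X - {p}) (smoothinf p circ) x) T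
      = diff F X circ (alpha_map X circ p x) T"
  proof cases
    case outside
    then show ?thesis
      using A_eq by (simp add: diff_alpha alpha_map_apply[OF assms(2,3)])
  next
    case minus
    then have "T \<in> ?E" and "\<not> fst T p"
      using A_eq by auto
    have term_eq: "?sgn S * x S * diff_coeff F X circ S T
        = ?sgn T * (x S * diff_coeff F (X - {p}) (smoothinf p circ) S T)" if "S \<in> ?A" for S
    proof -
      have "?sgn S * diff_coeff F X circ S T
          = ?sgn T * diff_coeff F (X - {p}) (smoothinf p circ) S T"
        using that A_eq \<open>\<not> fst T p\<close> by (intro diff_coeff_smoothinf[OF assms(1,3)]) auto
      then show ?thesis
        by (metis mult.assoc mult.left_commute)
    qed
    have "diff F X circ (alpha_map X circ p x) T
        = (\<Sum>S\<in>?A. ?sgn S * x S * diff_coeff F X circ S T)"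
      using \<open>T \<in> ?E\<close> by (simp add: diff_alpha)
    also have "\<dots> = (\<Sum>S\<in>?A. ?sgn T * (x S * diff_coeff F (X - {p}) (smoothinf p circ) S T))"
      by (rule sum.cong[OF refl term_eq])
    also have "\<dots> = ?sgn T * diff F (X - {p}) (smoothinf p circ) x T"
      using minus by (simp add: diff_apply sum_distrib_left)
    also have "\<dots> = alpha_map X circ p (diff F (X - {p}) (smoothinf p circ) x) T"
      using minus by (simp add: alpha_map_apply[OF assms(2,3)])
    finally show ?thesis
      by simp
  next
    case plus
    then have "(\<Sum>S\<in>?A. ?sgn S * x S * diff_coeff F X circ S T) = 0"
      using A_eq plus(2) by (intro sum.neutral ballI) (simp add: diff_coeff_eq_0[of _ p T])
    then show ?thesis
      using plus A_eq by (simp add: diff_alpha alpha_map_apply[OF assms(2,3)])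
  qed
qed

lemma beta_map_diff:
  assumes "finite X" and "finite (enh_states X circ)" and "p \<in> X"
  shows "beta_map X circ p (diff F X circ y)
       = diff F (X - {p}) (smooth0 p circ) (beta_map X circ p y)"
proof
  fix T
  let ?A0 = "enh_states (X - {p}) (smooth0 p circ)" and ?E = "enh_states X circ"
  show "beta_map X circ p (diff F X circ y) T
      = diff F (X - {p}) (smooth0 p circ) (beta_map X circ p y) T"
  proof (cases "T \<in> ?A0")
    case False
    then show ?thesis
      by (simp add: beta_map_apply[OF assms(2,3)] diff_apply)
  next
    case True
    have "mark_plus p T \<in> ?E"
      using bij_betw_apply[OF bij_betw_mark_plus[OF assms(3)] True] by simp
    then have "beta_map X circ p (diff F X circ y) T
        = (\<Sum>S\<in>?E. y S * diff_coeff F X circ S (mark_plus p T))"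
      using True by (simp add: beta_map_apply[OF assms(2,3)] diff_apply)
    also have "\<dots> = (\<Sum>S\<in>{S \<in> ?E. fst S p}. y S * diff_coeff F X circ S (mark_plus p T))"
      using assms(2) diff_coeff_eq_0[of _ p "mark_plus p T" F X circ]
      by (intro sum.mono_neutral_right) auto
    also have "\<dots> = (\<Sum>R\<in>?A0. y (mark_plus p R) * diff_coeff F X circ (mark_plus p R) (mark_plus p T))"
      by (rule sum.reindex_bij_betw[OF bij_betw_mark_plus[OF assms(3)], symmetric])
    also have "\<dots> = (\<Sum>R\<in>?A0. beta_map X circ p y R * diff_coeff F (X - {p}) (smooth0 p circ) R T)"
      using True by (intro sum.cong refl) (simp add: beta_map_apply[OF assms(2,3)]
          diff_coeff_mark_plus[OF assms(1,3)] enh_states_Diff_singletonD)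
    also have "\<dots> = diff F (X - {p}) (smooth0 p circ) (beta_map X circ p y) T"
      using True by (simp add: diff_apply)
    finally show ?thesis .
  qed
qed

lemma is_chainD: "is_chain X circ x \<Longrightarrow> S \<notin> enh_states X circ \<Longrightarrow> x S = 0"
  unfolding is_chain_def by blast

lemma alpha_map_eq_0D:
  assumes "finite (enh_states X circ)" and "p \<in> X"
    and "is_chain (X - {p}) (smoothinf p circ) x" and "alpha_map X circ p x = (\<lambda>_. 0)"
  shows "x = (\<lambda>_. 0)"
proof
  fix T
  show "x T = 0"
    using is_chainD[OF assms(3)] fun_cong[OF assms(4), of T]
    by (cases "T \<in> enh_states (X - {p}) (smoothinf p circ)")
      (auto simp: alpha_map_apply[OF assms(1,2)])
qed

lemma beta_map_alpha_map:
  assumes "finite (enh_states X circ)" and "p \<in> X"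
  shows "beta_map X circ p (alpha_map X circ p x) = (\<lambda>_. 0)"
  using assms by (auto simp: beta_map_apply alpha_map_apply enh_states_smoothinf)

lemma beta_map_eq_0_iff:
  assumes "finite (enh_states X circ)" and "p \<in> X" and "is_chain X circ y"
  shows "beta_map X circ p y = (\<lambda>_. 0)
    \<longleftrightarrow> (\<exists>x. is_chain (X - {p}) (smoothinf p circ) x \<and> alpha_map X circ p x = y)"
proof
  let ?A = "enh_states (X - {p}) (smoothinf p circ)" and ?E = "enh_states X circ"
  assume ker: "beta_map X circ p y = (\<lambda>_. 0)"
  define x where "x T = (if T \<in> ?A then (-1) ^ t_pre (X - {p}) p T * y T else 0)" for T
  have "alpha_map X circ p x T = y T" for T
  proof (cases "T \<in> ?A")
    case True
    then show ?thesis
      by (simp add: alpha_map_apply[OF assms(1,2)] x_def flip: mult.assoc power_add)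
  next
    case False
    have "y T = 0"
    proof (cases "T \<in> ?E")
      case True
      then have "fst T p"
        using False enh_states_smoothinf[OF assms(2)] by blast
      then have "y T = beta_map X circ p y (beta0 p T)"
        using True by (simp add: beta_map_apply[OF assms(1,2)] mark_plus_beta0
            beta0_in_enh_states_smooth0)
      then show ?thesis
        using ker by simp
    next
      case False
      then show ?thesis
        by (rule is_chainD[OF assms(3)])
    qed
    then show ?thesis
      using False by (simp add: alpha_map_apply[OF assms(1,2)])
  qed
  moreover have "is_chain (X - {p}) (smoothinf p circ) x"
    by (simp add: is_chain_def x_def)
  ultimately show "\<exists>x. is_chain (X - {p}) (smoothinf p circ) x \<and> alpha_map X circ p x = y"
    by blast
next
  assume "\<exists>x. is_chain (X - {p}) (smoothinf p circ) x \<and> alpha_map X circ p x = y"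
  then show "beta_map X circ p y = (\<lambda>_. 0)"
    using beta_map_alpha_map[OF assms(1,2)] by blast
qed

lemma beta_map_surj:
  assumes "finite (enh_states X circ)" and "p \<in> X"
    and "is_chain (X - {p}) (smooth0 p circ) z"
  shows "\<exists>y. is_chain X circ y \<and> beta_map X circ p y = z"
proof -
  define y where "y S = (if S \<in> enh_states X circ \<and> fst S p then z (beta0 p S) else 0)" for S
  have "beta_map X circ p y T = z T" for T
    using is_chainD[OF assms(3)] bij_betw_apply[OF bij_betw_mark_plus[OF assms(2), of circ]]
    by (cases "T \<in> enh_states (X - {p}) (smooth0 p circ)")
      (auto simp: beta_map_apply[OF assms(1,2)] y_def beta0_mark_plus enh_states_Diff_singletonD)
  moreover have "is_chain X circ y"
    by (simp add: is_chain_def y_def)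
  ultimately show ?thesis
    by blast
qed

theorem theorem7p1:
  fixes F :: "'a topology" and X :: "nat set" and circ :: "(nat \<Rightarrow> bool) \<Rightarrow> 'a set set"
    and p :: nat
  assumes "surface F" and "diagram F X circ" and "p \<in> X"
  defines "X' \<equiv> X - {p}" and "c0 \<equiv> smooth0 p circ" and "cinf \<equiv> smoothinf p circ"
  shows
    \<comment> \<open>gradings: alpha_0 : C_{ijs}(D_inf) -> C_{i-1,j-1,s}(D_p), beta : C_{ijs}(D_p) -> C_{i-1,j-1,s}(D_0)\<close>
    "(\<forall>S\<in>enh_states X' cinf. alpha0 p S \<in> enh_states X circ \<and>
        I_idx X (alpha0 p S) = I_idx X' S - 1 \<and>
        J_idx F X circ (alpha0 p S) = J_idx F X' cinf S - 1 \<and>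
        Psi F circ (alpha0 p S) = Psi F cinf S)
   \<and> (\<forall>S\<in>enh_states X circ. fst S p \<longrightarrow> beta0 p S \<in> enh_states X' c0 \<and>
        I_idx X' (beta0 p S) = I_idx X S - 1 \<and>
        J_idx F X' c0 (beta0 p S) = J_idx F X circ S - 1 \<and>
        Psi F c0 (beta0 p S) = Psi F circ S)
   \<comment> \<open>(1) alpha and beta are chain maps\<close>
   \<and> (\<forall>x. is_chain X' cinf x \<longrightarrow> is_chain X circ (alpha_map X circ p x) \<and>
        alpha_map X circ p (diff F X' cinf x) = diff F X circ (alpha_map X circ p x))
   \<and> (\<forall>y. is_chain X circ y \<longrightarrow> is_chain X' c0 (beta_map X circ p y) \<and>
        beta_map X circ p (diff F X circ y) = diff F X' c0 (beta_map X circ p y))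
   \<comment> \<open>(2) exactness of 0 -> C(D_inf) -> C(D_p) -> C(D_0) -> 0\<close>
   \<and> (\<forall>x. is_chain X' cinf x \<longrightarrow> alpha_map X circ p x = (\<lambda>_. 0) \<longrightarrow> x = (\<lambda>_. 0))
   \<and> (\<forall>y. is_chain X circ y \<longrightarrow>
        (beta_map X circ p y = (\<lambda>_. 0) \<longleftrightarrow> (\<exists>x. is_chain X' cinf x \<and> alpha_map X circ p x = y)))
   \<and> (\<forall>z. is_chain X' c0 z \<longrightarrow> (\<exists>y. is_chain X circ y \<and> beta_map X circ p y = z))"
proof -
  have finX: "finite X" and finE: "finite (enh_states X circ)"
    using assms(2) by (auto simp: diagram_def intro: finite_enh_states)
  note pX = \<open>p \<in> X\<close>
  show ?thesis
    unfolding X'_def c0_def cinf_def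
    using alpha0_grading[OF finX pX] beta0_grading[OF finX pX]
      is_chain_alpha_map[OF finE pX] alpha_map_diff[OF finX finE pX]
      is_chain_beta_map[OF finE pX] beta_map_diff[OF finX finE pX]
      alpha_map_eq_0D[OF finE pX] beta_map_eq_0_iff[OF finE pX] beta_map_surj[OF finE pX]
    by blast
qed

end
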